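(* In any mixed signaling scheme, there is no non-splittable signal $S$ with $|\{w_1(j): j\in S\}|\ge 3$.
   Context: Setting: $n\ge 2$ bidders, $m$ item types with probabilities $p_j$, nonnegative valuations $v_{i,j}$; $\psi_{i,j}=p_jv_{i,j}$. A mixed signaling scheme is a finite signal set $\mathcal{S}$ and $\varphi:[m]\times\mathcal{S}\to[0,1]$ with $\sum_S\varphi(j,S)=1$ for each $j$; $\varphi_{j,S}=\varphi(j,S)$; a signal is identified with its support, so $j\in S$ means $\varphi_{j,S}>0$. Ties are broken by a fixed priority order on bidders; $w_1(j)$ is the bidder maximizing $\psi_{i,j}$. For a signal $S$ and a subset $T\subseteq S$ define $\mathrm{rev}_S(T)=\mathrm{max2}_i\sum_{j\in T}\varphi_{j,S}\psi_{i,j}$ (second-largest value over bidders, with multiplicity), and $\mathrm{rev}(S)=\mathrm{rev}_S(S)$. $S$ is splittable if there is a partition $S=S_1\cup\dots\cup S_t$ into $t\ge 2$ nonempty parts with $\sum_{k=1}^t\mathrm{rev}_S(S_k)\ge\mathrm{rev}(S)$; otherwise $S$ is non-splittable. *)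

theory Defs
  imports Complex_Main
begin

text \<open>Bidders are 0..<n, item types are 0..<m. psi i j stands for p_j * v_{i,j}.
  The fixed priority order on bidders is given by an injective rank function prio
  (smaller rank = higher priority).\<close>

definition max2 :: "nat \<Rightarrow> (nat \<Rightarrow> real) \<Rightarrow> real" where
  "max2 n f = sort (map f [0..<n]) ! (n - 2)"

definition w1 :: "nat \<Rightarrow> (nat \<Rightarrow> nat) \<Rightarrow> (nat \<Rightarrow> nat \<Rightarrow> real) \<Rightarrow> nat \<Rightarrow> nat" where
  "w1 n prio psi j = (THE i. i < n \<and> (\<forall>k<n. psi k j \<le> psi i j)
       \<and> (\<forall>k<n. psi k j = psi i j \<longrightarrow> prio i \<le> prio k))"

definition supp_sig :: "nat \<Rightarrow> (nat \<Rightarrow> 's \<Rightarrow> real) \<Rightarrow> 's \<Rightarrow> nat set" where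
  "supp_sig m phi s = {j. j < m \<and> phi j s > 0}"

definition revS :: "nat \<Rightarrow> (nat \<Rightarrow> nat \<Rightarrow> real) \<Rightarrow> (nat \<Rightarrow> 's \<Rightarrow> real) \<Rightarrow> 's \<Rightarrow> nat set \<Rightarrow> real" where
  "revS n psi phi s T = max2 n (\<lambda>i. \<Sum>j\<in>T. phi j s * psi i j)"

definition splittable :: "nat \<Rightarrow> nat \<Rightarrow> (nat \<Rightarrow> nat \<Rightarrow> real) \<Rightarrow> (nat \<Rightarrow> 's \<Rightarrow> real) \<Rightarrow> 's \<Rightarrow> bool" where
  "splittable n m psi phi s \<longleftrightarrow>
     (\<exists>P. \<Union>P = supp_sig m phi s \<and> (\<forall>A\<in>P. A \<noteq> {}) \<and> pairwise disjnt P \<and> card P \<ge> 2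
        \<and> (\<Sum>A\<in>P. revS n psi phi s A) \<ge> revS n psi phi s (supp_sig m phi s))"

end

theory Submission imports Defs begin

text \<open>Let \<open>x, y\<close> be two distinct bidders attaining the top two values of the bids on \<open>S\<close>.
  Since at least three bidders win items of \<open>S\<close>, some item \<open>j\<^sub>0 \<in> S\<close> has a winner
  \<open>c \<notin> {x, y}\<close>. Split \<open>S\<close> into the items \<open>G\<close> won by \<open>c\<close> and the rest \<open>H\<close>. On \<open>G\<close> the
  bidder \<open>c\<close> dominates everyone, so \<open>x\<close> and \<open>y\<close> both bid at most the second price of \<open>G\<close>;
  on \<open>H\<close> the smaller of their bids is at most the second price of \<open>H\<close>. Adding up,
  \<open>rev(S) \<le> min (bid x) (bid y) \<le> rev(G) + rev(H)\<close>.\<close>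

lemma length_filter_sort_map_upt:
  "length (filter P (sort (map (f :: nat \<Rightarrow> real) [0..<n]))) = card {i. i < n \<and> P (f i)}"
proof -
  have "length (filter P (sort (map f [0..<n]))) = length (filter (\<lambda>i. P (f i)) [0..<n])"
    by (simp add: filter_sort filter_map comp_def)
  also have "\<dots> = card {i. i < n \<and> P (f i)}"
    by (simp add: length_filter_conv_card cong: conj_cong)
  finally show ?thesis .
qed

lemma last_two_split:
  assumes "length xs = n" "n \<ge> 2"
  shows "xs = take (n - 2) xs @ [xs ! (n - 2), xs ! (n - 1)]"
proof -
  have "drop (n - 2) xs = [xs ! (n - 2), xs ! (n - 1)]"
    using assms by (simp add: Cons_nth_drop_Suc[symmetric] Suc_diff_Suc numeral_2_eq_2)
  then show ?thesis by (metis append_take_drop_id)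
qed

lemma max2_ge_min:
  assumes "n \<ge> 2" "a < n" "b < n" "a \<noteq> b"
  shows "min (f a) (f b) \<le> max2 n f"
proof (rule ccontr)
  assume less: "\<not> ?thesis"
  define xs where "xs = sort (map f [0..<n])"
  have len: "length xs = n" and srt: "sorted xs" by (simp_all add: xs_def)
  have max2_xs: "max2 n f = xs ! (n - 2)" by (simp add: max2_def xs_def)
  have "card {a, b} \<le> card {i. i < n \<and> f i > max2 n f}"
    using less assms by (intro card_mono) auto
  then have two_above: "2 \<le> length (filter (\<lambda>v. v > max2 n f) xs)"
    using assms(4) by (simp add: xs_def length_filter_sort_map_upt)
  have "\<forall>v\<in>set (take (n - 2) xs). v \<le> max2 n f"
    unfolding max2_xs using srt len assms(1)
    by (auto simp: in_set_conv_nth intro!: sorted_nth_mono; linarith)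
  then have "filter (\<lambda>v. v > max2 n f) (take (n - 2) xs) = []"
    by (auto simp: filter_empty_conv)
  then have "length (filter (\<lambda>v. v > max2 n f) xs) \<le> 1"
    unfolding max2_xs by (subst last_two_split[OF len assms(1)]) simp
  with two_above show False by simp
qed

lemma max2_attained_twice:
  assumes "n \<ge> 2"
  obtains x y where "x < n" "y < n" "x \<noteq> y" "max2 n f \<le> f x" "max2 n f \<le> f y"
proof -
  define xs where "xs = sort (map f [0..<n])"
  have len: "length xs = n" and srt: "sorted xs" by (simp_all add: xs_def)
  have max2_xs: "max2 n f = xs ! (n - 2)" by (simp add: max2_def xs_def)
  have "xs ! (n - 2) \<le> xs ! (n - 1)" using srt len assms by (intro sorted_nth_mono) auto
  then have "2 \<le> length (filter (\<lambda>v. v \<ge> max2 n f) xs)"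
    unfolding max2_xs by (subst last_two_split[OF len assms]) simp
  then have "2 \<le> card {i. i < n \<and> f i \<ge> max2 n f}"
    by (simp add: xs_def length_filter_sort_map_upt)
  then obtain A where "A \<subseteq> {i. i < n \<and> f i \<ge> max2 n f}" "card A = 2"
    by (meson obtain_subset_with_card_n)
  then show ?thesis using that by (auto simp: card_2_iff)
qed

lemma min_add_le_max2_add:
  assumes "n \<ge> 2" "c < n" "\<forall>k<n. g k \<le> g c"
    and "x < n" "y < n" "x \<noteq> y" "x \<noteq> c" "y \<noteq> c"
  shows "min (f x + g x) (f y + g y) \<le> max2 n f + max2 n g"
proof -
  have "g x \<le> max2 n g" "g y \<le> max2 n g"
    using max2_ge_min[OF assms(1) assms(2), of _ g] assms by (metis min.absorb2)+
  moreover have "min (f x) (f y) \<le> max2 n f" using max2_ge_min assms by blast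
  ultimately show ?thesis by linarith
qed

lemma w1_maximal:
  assumes "n > 0" "inj_on prio {..<n}"
  shows "w1 n prio psi j < n" "\<forall>k<n. psi k j \<le> psi (w1 n prio psi j) j"
proof -
  define maximal where "maximal i \<longleftrightarrow> i < n \<and> (\<forall>k<n. psi k j \<le> psi i j)" for i
  have "(MAX i\<in>{..<n}. psi i j) \<in> (\<lambda>i. psi i j) ` {..<n}"
    using assms(1) by (intro Max_in) auto
  then obtain i0 where "i0 < n" "psi i0 j = (MAX i\<in>{..<n}. psi i j)" by auto
  then have "maximal i0" unfolding maximal_def by simp
  then obtain i where i: "maximal i" "\<forall>k. maximal k \<longrightarrow> prio i \<le> prio k"
    using ex_has_least_nat[of maximal i0 prio] by blast
  define winner where "winner i \<longleftrightarrow> i < n \<and> (\<forall>k<n. psi k j \<le> psi i j)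
       \<and> (\<forall>k<n. psi k j = psi i j \<longrightarrow> prio i \<le> prio k)" for i
  have "winner i" using i unfolding winner_def maximal_def by (metis order.refl)
  moreover have "i' = i" if "winner i'" for i'
  proof -
    have "psi i j = psi i' j" "prio i = prio i'"
      using \<open>winner i\<close> that unfolding winner_def by (meson order_antisym)+
    then show ?thesis using assms(2) \<open>winner i\<close> that by (auto simp: winner_def inj_on_def)
  qed
  ultimately have "w1 n prio psi j = i"
    unfolding w1_def winner_def[symmetric] by (rule the_equality)
  then show "w1 n prio psi j < n" "\<forall>k<n. psi k j \<le> psi (w1 n prio psi j) j"
    using i(1) by (simp_all add: maximal_def)
qed

lemma card_image_gt_obtain:
  assumes "card B < card (f ` A)" "finite B"
  obtains a where "a \<in> A" "f a \<notin> B"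
  using assms card_mono[OF assms(2)] by (metis image_subsetI not_le)

definition signal_bid :: "(nat \<Rightarrow> nat \<Rightarrow> real) \<Rightarrow> (nat \<Rightarrow> 's \<Rightarrow> real) \<Rightarrow> 's \<Rightarrow> nat set \<Rightarrow> nat \<Rightarrow> real"
  where "signal_bid psi phi s T i = (\<Sum>j\<in>T. phi j s * psi i j)"

lemma revS_eq_max2_signal_bid: "revS n psi phi s T = max2 n (signal_bid psi phi s T)"
  unfolding revS_def signal_bid_def ..

lemma revS_le_split_at_dominant:
  assumes "n \<ge> 2" "finite S" "G \<subseteq> S" "c < n"
    and "\<forall>j\<in>G. 0 \<le> phi j s \<and> (\<forall>k<n. psi k j \<le> psi c j)"
    and "x < n" "y < n" "x \<noteq> y" "x \<noteq> c" "y \<noteq> c"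
    and "revS n psi phi s S \<le> min (signal_bid psi phi s S x) (signal_bid psi phi s S y)"
  shows "revS n psi phi s S \<le> revS n psi phi s (S - G) + revS n psi phi s G"
proof -
  let ?bid = "signal_bid psi phi s"
  have split: "?bid S i = ?bid (S - G) i + ?bid G i" for i
    using assms(2,3) by (simp add: signal_bid_def sum.subset_diff)
  have "\<forall>k<n. ?bid G k \<le> ?bid G c"
    using assms(5) by (auto simp: signal_bid_def intro!: sum_mono mult_left_mono)
  then have "min (?bid S x) (?bid S y) \<le> max2 n (?bid (S - G)) + max2 n (?bid G)"
    unfolding split using min_add_le_max2_add assms by blast
  then show ?thesis using assms(11) unfolding revS_eq_max2_signal_bid by linarith
qed

lemma splittable_if_two_parts:
  assumes "G \<subseteq> supp_sig m phi s" "G \<noteq> {}" "supp_sig m phi s - G \<noteq> {}"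
    and "revS n psi phi s (supp_sig m phi s)
           \<le> revS n psi phi s (supp_sig m phi s - G) + revS n psi phi s G"
  shows "splittable n m psi phi s"
  unfolding splittable_def
proof (intro exI[of _ "{supp_sig m phi s - G, G}"] conjI)
  have "supp_sig m phi s - G \<noteq> G" using assms(2) by blast
  then show "2 \<le> card {supp_sig m phi s - G, G}"
    and "revS n psi phi s (supp_sig m phi s) \<le> (\<Sum>A\<in>{supp_sig m phi s - G, G}. revS n psi phi s A)"
    using assms(4) by simp_all
qed (use assms in \<open>auto simp: pairwise_def disjnt_def\<close>)

theorem claim3:
  fixes n m :: nat and p :: "nat \<Rightarrow> real" and v :: "nat \<Rightarrow> nat \<Rightarrow> real"
    and prio :: "nat \<Rightarrow> nat" and Sig :: "'s set" and phi :: "nat \<Rightarrow> 's \<Rightarrow> real"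
    and s :: 's
  assumes "n \<ge> 2"
    and "\<forall>j<m. p j \<ge> 0" and "(\<Sum>j<m. p j) = 1"
    and "\<forall>i<n. \<forall>j<m. v i j \<ge> 0"
    and "inj_on prio {..<n}"
    and "finite Sig"
    and "\<forall>j<m. \<forall>t\<in>Sig. 0 \<le> phi j t \<and> phi j t \<le> 1"
    and "\<forall>j<m. (\<Sum>t\<in>Sig. phi j t) = 1"
    and "s \<in> Sig"
    and "card (w1 n prio (\<lambda>i j. p j * v i j) ` supp_sig m phi s) \<ge> 3"
  shows "splittable n m (\<lambda>i j. p j * v i j) phi s"
proof -
  define psi where "psi = (\<lambda>i j. p j * v i j)"
  define S where "S = supp_sig m phi s"
  define W where "W = w1 n prio psi"
  have W: "W j < n" "\<forall>k<n. psi k j \<le> psi (W j) j" for j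
    unfolding W_def using w1_maximal assms(1,5) by auto
  obtain x y where xy: "x < n" "y < n" "x \<noteq> y"
    "revS n psi phi s S \<le> min (signal_bid psi phi s S x) (signal_bid psi phi s S y)"
    using max2_attained_twice[OF assms(1)] by (metis min.bounded_iff revS_eq_max2_signal_bid)
  have many_winners: "3 \<le> card (W ` S)" using assms(10) by (simp add: W_def psi_def S_def)
  have "card {x, y} < card (W ` S)" using xy(3) many_winners by simp
  then obtain j0 where "j0 \<in> S" "W j0 \<notin> {x, y}" by (rule card_image_gt_obtain) simp
  have "card {W j0} < card (W ` S)" using many_winners by simp
  then obtain j1 where "j1 \<in> S" "W j1 \<notin> {W j0}" by (rule card_image_gt_obtain) simp
  define G where "G = {j \<in> S. W j = W j0}"
  have "finite S" by (simp add: S_def supp_sig_def)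
  have "G \<subseteq> S" by (auto simp: G_def)
  have dominant: "\<forall>j\<in>G. 0 \<le> phi j s \<and> (\<forall>k<n. psi k j \<le> psi (W j0) j)"
    using W(2) unfolding G_def S_def supp_sig_def by (metis (mono_tags) less_imp_le mem_Collect_eq)
  have "revS n psi phi s S \<le> revS n psi phi s (S - G) + revS n psi phi s G"
    using revS_le_split_at_dominant[of n S G "W j0" phi s psi x y] assms(1) \<open>finite S\<close>
      \<open>G \<subseteq> S\<close> W(1) dominant xy \<open>W j0 \<notin> {x, y}\<close> by auto
  moreover have "j0 \<in> G" "j1 \<in> S - G" using \<open>j0 \<in> S\<close> \<open>j1 \<in> S\<close> \<open>W j1 \<notin> {W j0}\<close>
    by (auto simp: G_def)
  ultimately show ?thesis using \<open>G \<subseteq> S\<close> unfolding psi_def[symmetric] S_def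
    by (intro splittable_if_two_parts[of G]) auto
qed

end
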